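(* Let $G$ be a finite simple $P_4$-free graph (i.e. $G$ has no induced subgraph isomorphic to the path on four vertices) with $n$ vertices, and let $D$ be a dominating set of $G$ of minimum cardinality $\gamma(G)$. Then $$n-\gamma(G)\le \mathcal{C}_D(G)\le 2n-\gamma(G).$$
   Context: A set $D\subseteq V(G)$ is a dominating set of $G$ if every vertex of $V(G)\setminus D$ has a neighbor in $D$; $\gamma(G)$ is the minimum cardinality of a dominating set. For $D\subseteq V(G)$, $\mathcal{C}_D(G)=\sum_{u\in D}\deg_G(u)$. *)

theory Defs
  imports Main
begin

definition simple_graph :: "'a set \<Rightarrow> ('a \<Rightarrow> 'a \<Rightarrow> bool) \<Rightarrow> bool" where
  "simple_graph V E \<longleftrightarrow> finite V \<and> (\<forall>u v. E u v \<longrightarrow> E v u)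
     \<and> (\<forall>v. \<not> E v v) \<and> (\<forall>u v. E u v \<longrightarrow> u \<in> V \<and> v \<in> V)"

definition degree :: "'a set \<Rightarrow> ('a \<Rightarrow> 'a \<Rightarrow> bool) \<Rightarrow> 'a \<Rightarrow> nat" where
  "degree V E v = card {u \<in> V. E v u}"

definition P4_free :: "'a set \<Rightarrow> ('a \<Rightarrow> 'a \<Rightarrow> bool) \<Rightarrow> bool" where
  "P4_free V E \<longleftrightarrow> \<not> (\<exists>a\<in>V. \<exists>b\<in>V. \<exists>c\<in>V. \<exists>d\<in>V.
     distinct [a, b, c, d] \<and> E a b \<and> E b c \<and> E c d
     \<and> \<not> E a c \<and> \<not> E b d \<and> \<not> E a d)"

definition dominating_set :: "'a set \<Rightarrow> ('a \<Rightarrow> 'a \<Rightarrow> bool) \<Rightarrow> 'a set \<Rightarrow> bool" where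
  "dominating_set V E D \<longleftrightarrow> D \<subseteq> V \<and> (\<forall>v \<in> V - D. \<exists>u \<in> D. E v u)"

definition domination_number :: "'a set \<Rightarrow> ('a \<Rightarrow> 'a \<Rightarrow> bool) \<Rightarrow> nat" where
  "domination_number V E = (LEAST k. \<exists>D. dominating_set V E D \<and> card D = k)"

definition degree_sum :: "'a set \<Rightarrow> ('a \<Rightarrow> 'a \<Rightarrow> bool) \<Rightarrow> 'a set \<Rightarrow> nat" where
  "degree_sum V E D = (\<Sum>u\<in>D. degree V E u)"

end

theory Submission
  imports Defs
begin

text \<open>Each closed neighbourhood \<open>N[w]\<close> meets a dominating set \<open>D\<close>, and double counting gives
  \<open>\<Sum>\<^sub>w |N[w] \<inter> D| = \<Sum>\<^sub>u\<^sub>\<in>\<^sub>D (deg u + 1) = C\<^sub>D(G) + \<gamma>(G)\<close>.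
  So both bounds follow once every \<open>N[w]\<close> contains at most two vertices of a minimum
  dominating set \<open>D\<close>. If some \<open>N[v]\<close> contained three of them, forming \<open>T\<close>, then
  \<open>P\<^sub>4\<close>-freeness yields a neighbour \<open>x\<close> of \<open>v\<close> adjacent to every vertex outside \<open>N[v]\<close>
  dominated by \<open>T\<close>: the sets of such vertices adjacent to the various neighbours of \<open>v\<close>
  are nested, so an inclusion-maximal one contains them all. Then \<open>(D - T) \<union> {v, x}\<close>
  would be a smaller dominating set.\<close>

definition closed_neighbourhood :: "'a set \<Rightarrow> ('a \<Rightarrow> 'a \<Rightarrow> bool) \<Rightarrow> 'a \<Rightarrow> 'a set" where
  "closed_neighbourhood V E v = {u \<in> V. u = v \<or> E v u}"

lemma simple_graph_sym: "simple_graph V E \<Longrightarrow> E u v \<Longrightarrow> E v u"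
  unfolding simple_graph_def by blast

lemma simple_graph_irrefl: "simple_graph V E \<Longrightarrow> \<not> E v v"
  unfolding simple_graph_def by blast

lemma simple_graph_edge_in_vertices: "simple_graph V E \<Longrightarrow> E u v \<Longrightarrow> u \<in> V \<and> v \<in> V"
  unfolding simple_graph_def by blast

lemma simple_graph_finite: "simple_graph V E \<Longrightarrow> finite V"
  unfolding simple_graph_def by blast

lemma dominating_set_subset: "dominating_set V E D \<Longrightarrow> D \<subseteq> V"
  unfolding dominating_set_def by blast

lemma dominating_set_finite: "simple_graph V E \<Longrightarrow> dominating_set V E D \<Longrightarrow> finite D"
  using dominating_set_subset simple_graph_finite finite_subset by metis

lemma domination_number_le_card:
  "dominating_set V E D \<Longrightarrow> domination_number V E \<le> card D"
  unfolding domination_number_def by (rule Least_le) blast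

lemma card_closed_neighbourhood:
  assumes "simple_graph V E" "v \<in> V"
  shows "card (closed_neighbourhood V E v) = degree V E v + 1"
proof -
  have "closed_neighbourhood V E v = insert v {u \<in> V. E v u}"
    using assms unfolding closed_neighbourhood_def by blast
  moreover have "v \<notin> {u \<in> V. E v u}"
    using simple_graph_irrefl[OF assms(1)] by blast
  ultimately show ?thesis
    using simple_graph_finite[OF assms(1)] by (simp add: degree_def)
qed

lemma sum_card_filter_swap:
  assumes "finite A" "finite B"
  shows "(\<Sum>a\<in>A. card {b \<in> B. R a b}) = (\<Sum>b\<in>B. card {a \<in> A. R a b})"
proof -
  have "(\<Sum>a\<in>A. card {b \<in> B. R a b}) = (\<Sum>a\<in>A. \<Sum>b\<in>B. if R a b then 1 else 0)"
    using assms by (simp add: sum.inter_filter[symmetric])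
  also have "\<dots> = (\<Sum>b\<in>B. \<Sum>a\<in>A. if R a b then 1 else 0)"
    by (rule sum.swap)
  also have "\<dots> = (\<Sum>b\<in>B. card {a \<in> A. R a b})"
    using assms by (simp add: sum.inter_filter[symmetric])
  finally show ?thesis .
qed

lemma degree_sum_add_card_eq_sum_card_inter_closed_neighbourhood:
  assumes G: "simple_graph V E" and "D \<subseteq> V"
  shows "degree_sum V E D + card D = (\<Sum>w\<in>V. card (D \<inter> closed_neighbourhood V E w))"
proof -
  have finD: "finite D"
    using finite_subset[OF \<open>D \<subseteq> V\<close> simple_graph_finite[OF G]] .
  have "degree_sum V E D + card D = (\<Sum>u\<in>D. degree V E u + 1)"
    by (simp add: degree_sum_def sum_Suc)
  also have "\<dots> = (\<Sum>u\<in>D. card (closed_neighbourhood V E u))"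
    using assms card_closed_neighbourhood[OF G] by (intro sum.cong) auto
  also have "\<dots> = (\<Sum>u\<in>D. card {w \<in> V. w = u \<or> E u w})"
    by (simp only: closed_neighbourhood_def)
  also have "\<dots> = (\<Sum>w\<in>V. card {u \<in> D. w = u \<or> E u w})"
    using sum_card_filter_swap[OF finD simple_graph_finite[OF G]] .
  also have "\<dots> = (\<Sum>w\<in>V. card (D \<inter> closed_neighbourhood V E w))"
  proof (rule sum.cong)
    fix w
    have "E u w = E w u" for u
      using simple_graph_sym[OF G] by blast
    then have "{u \<in> D. w = u \<or> E u w} = D \<inter> closed_neighbourhood V E w"
      using \<open>D \<subseteq> V\<close> unfolding closed_neighbourhood_def by blast
    then show "card {u \<in> D. w = u \<or> E u w} = card (D \<inter> closed_neighbourhood V E w)"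
      by simp
  qed simp
  finally show ?thesis .
qed

lemma dominating_set_meets_closed_neighbourhood:
  assumes "dominating_set V E D" "w \<in> V"
  shows "D \<inter> closed_neighbourhood V E w \<noteq> {}"
  using assms unfolding dominating_set_def closed_neighbourhood_def by blast

text \<open>Otherwise the vertices \<open>b, x, v, y, a\<close> contain an induced \<open>P\<^sub>4\<close>, depending on which of
  the edges \<open>ab\<close> and \<open>xy\<close> are present.\<close>
lemma P4_free_neighbours_nested:
  assumes G: "simple_graph V E" and "P4_free V E"
    and "E v x" "E v y"
    and "a \<noteq> v" "\<not> E v a" "b \<noteq> v" "\<not> E v b"
    and "E x b" "E y a"
  shows "E x a \<or> E y b"
proof (rule ccontr)
  assume nested: "\<not> (E x a \<or> E y b)"
  have sym: "\<And>u w. E u w \<Longrightarrow> E w u" and irr: "\<And>u. \<not> E u u"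
    using simple_graph_sym[OF G] simple_graph_irrefl[OF G] by blast+
  have induced_path_free: "\<not> (distinct [p, q, r, s] \<and> E p q \<and> E q r \<and> E r s
      \<and> \<not> E p r \<and> \<not> E q s \<and> \<not> E p s)" if "p \<in> V" "q \<in> V" "r \<in> V" "s \<in> V" for p q r s
    using \<open>P4_free V E\<close> that unfolding P4_free_def by blast
  have in_V: "v \<in> V" "x \<in> V" "y \<in> V" "a \<in> V" "b \<in> V"
    using simple_graph_edge_in_vertices[OF G] assms by blast+
  have flipped: "E x v" "E y v" "E b x" "E a y" "\<not> E a v" "\<not> E b v" "\<not> E a x" "\<not> E b y"
    using assms nested sym by blast+
  have loopless: "\<not> E v v" "\<not> E x x" "\<not> E y y" "\<not> E a a" "\<not> E b b"
    using irr by blast+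
  note configuration = in_V assms nested flipped loopless
  consider "E a b" "E x y" | "E a b" "\<not> E x y" | "\<not> E a b" "E x y" | "\<not> E a b" "\<not> E x y"
    by blast
  then show False
  proof cases
    case 1
    then show False
      using induced_path_free[of v x b a] configuration sym[of a b] by auto
  next
    case 2
    then show False
      using induced_path_free[of x b a y] configuration sym[of a b] by auto
  next
    case 3
    then show False
      using induced_path_free[of b x y a] configuration sym[of b a] by auto
  next
    case 4
    then show False
      using induced_path_free[of b x v y] configuration sym[of y x] by auto
  qed
qed

lemma P4_free_common_neighbour:
  assumes G: "simple_graph V E" and P4: "P4_free V E"
    and "A \<subseteq> V" "A \<noteq> {}"
    and outside: "\<And>a. a \<in> A \<Longrightarrow> a \<noteq> v \<and> \<not> E v a"
    and reached: "\<And>a. a \<in> A \<Longrightarrow> \<exists>y. E v y \<and> E y a"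
  shows "\<exists>x. E v x \<and> (\<forall>a\<in>A. E x a)"
proof -
  define C where "C = {y \<in> V. E v y}"
  define reach where "reach y = {a \<in> A. E y a}" for y
  have "finite C"
    using simple_graph_finite[OF G] unfolding C_def by simp
  moreover have "asymp_on C (\<lambda>x y. reach x \<subset> reach y)"
    unfolding asymp_on_def by (meson less_asym)
  moreover have "transp_on C (\<lambda>x y. reach x \<subset> reach y)"
    unfolding transp_on_def by (meson less_trans)
  moreover have "C \<noteq> {}"
    using \<open>A \<noteq> {}\<close> reached simple_graph_edge_in_vertices[OF G] unfolding C_def by blast
  ultimately have "\<exists>x\<in>C. \<forall>y\<in>C. y \<noteq> x \<longrightarrow> \<not> reach x \<subset> reach y"
    by (rule Finite_Set.bex_max_element)
  then obtain x where "x \<in> C" and "\<forall>y\<in>C. y \<noteq> x \<longrightarrow> \<not> reach x \<subset> reach y"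
    by blast
  then have maximal: "\<not> reach x \<subset> reach y" if "y \<in> C" for y
    using that by (cases "y = x") auto
  have "E x a" if "a \<in> A" for a
  proof (rule ccontr)
    assume "\<not> E x a"
    obtain y where "E v y" "E y a"
      using reached \<open>a \<in> A\<close> by blast
    have "reach x \<subseteq> reach y"
    proof
      fix b
      assume "b \<in> reach x"
      then have "b \<in> A" "E x b"
        unfolding reach_def by blast+
      then have "E y b"
        using P4_free_neighbours_nested[OF G P4, of v x y a b] \<open>x \<in> C\<close> \<open>E v y\<close> \<open>E y a\<close>
          \<open>\<not> E x a\<close> \<open>a \<in> A\<close> outside
        unfolding C_def by blast
      then show "b \<in> reach y"
        using \<open>b \<in> A\<close> unfolding reach_def by blast
    qed
    moreover have "a \<in> reach y - reach x"
      using \<open>a \<in> A\<close> \<open>E y a\<close> \<open>\<not> E x a\<close> unfolding reach_def by blast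
    ultimately have "reach x \<subset> reach y" by blast
    then show False
      using maximal \<open>E v y\<close> simple_graph_edge_in_vertices[OF G] unfolding C_def by blast
  qed
  then show ?thesis
    using \<open>x \<in> C\<close> unfolding C_def by blast
qed

lemma dominating_set_exchange:
  assumes G: "simple_graph V E" and dom: "dominating_set V E D"
    and "v \<in> V" "x \<in> V"
    and covered: "\<And>w. w \<in> V \<Longrightarrow> \<exists>t\<in>T. t = w \<or> E t w \<Longrightarrow> w = v \<or> E v w \<or> E x w"
  shows "dominating_set V E ((D - T) \<union> {v, x})"
  unfolding dominating_set_def
proof (intro conjI ballI)
  show "D - T \<union> {v, x} \<subseteq> V"
    using dominating_set_subset[OF dom] \<open>v \<in> V\<close> \<open>x \<in> V\<close> by blast
next
  fix w
  assume w: "w \<in> V - (D - T \<union> {v, x})"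
  have "\<exists>u\<in>D. u = w \<or> E w u"
    using dom w unfolding dominating_set_def by blast
  then consider u where "u \<in> D - T" "E w u" | t where "t \<in> T" "t = w \<or> E t w"
    using w simple_graph_sym[OF G] by blast
  then show "\<exists>u\<in>D - T \<union> {v, x}. E w u"
  proof cases
    case 1
    then show ?thesis by blast
  next
    case 2
    then show ?thesis
      using covered[of w] w simple_graph_sym[OF G] by blast
  qed
qed

lemma P4_free_min_dominating_set_closed_neighbourhood:
  assumes G: "simple_graph V E" and P4: "P4_free V E"
    and dom: "dominating_set V E D" and min: "card D = domination_number V E"
    and "v \<in> V"
  shows "card (D \<inter> closed_neighbourhood V E v) \<le> 2"
proof (rule ccontr)
  assume "\<not> ?thesis"
  then have "3 \<le> card (D \<inter> closed_neighbourhood V E v)"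
    by simp
  then obtain T where T: "T \<subseteq> D \<inter> closed_neighbourhood V E v" "card T = 3"
    by (meson obtain_subset_with_card_n)
  define A where "A = {a \<in> V. a \<noteq> v \<and> \<not> E v a \<and> (\<exists>t\<in>T. t = a \<or> E t a)}"
  have "A \<subseteq> V" and outside: "\<And>a. a \<in> A \<Longrightarrow> a \<noteq> v \<and> \<not> E v a"
    unfolding A_def by auto
  have reached: "\<exists>y. E v y \<and> E y a" if "a \<in> A" for a
    using that T(1) unfolding A_def closed_neighbourhood_def by blast
  obtain x where "x \<in> V" and x_covers: "\<And>a. a \<in> A \<Longrightarrow> E x a"
  proof (cases "A = {}")
    case True
    then show ?thesis
      using that \<open>v \<in> V\<close> by blast
  next
    case False
    then obtain x where "E v x" "\<forall>a\<in>A. E x a"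
      using P4_free_common_neighbour[OF G P4 \<open>A \<subseteq> V\<close> False outside reached] by blast
    then show ?thesis
      using that simple_graph_edge_in_vertices[OF G] by blast
  qed
  have "w = v \<or> E v w \<or> E x w" if "w \<in> V" "\<exists>t\<in>T. t = w \<or> E t w" for w
    using that x_covers unfolding A_def by blast
  then have "dominating_set V E ((D - T) \<union> {v, x})"
    by (rule dominating_set_exchange[OF G dom \<open>v \<in> V\<close> \<open>x \<in> V\<close>])
  then have "card D \<le> card ((D - T) \<union> {v, x})"
    using domination_number_le_card min by simp
  also have "\<dots> \<le> card (D - T) + 2"
    using card_Un_le[of "D - T" "{v, x}"] card_insert_le[of "{x}" v]
    by (cases "v = x") auto
  also have "\<dots> < card D"
  proof -
    have "finite D" "T \<subseteq> D"
      using dominating_set_finite[OF G dom] T(1) by blast+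
    then have "finite T"
      by (rule finite_subset[rotated])
    have "card (D - T) = card D - card T" "card T \<le> card D"
      using card_Diff_subset[OF \<open>finite T\<close> \<open>T \<subseteq> D\<close>] card_mono[OF \<open>finite D\<close> \<open>T \<subseteq> D\<close>] .
    then show ?thesis
      using T(2) by simp
  qed
  finally show False
    by simp
qed

theorem mainTheorem5:
  fixes V :: "'a set" and E :: "'a \<Rightarrow> 'a \<Rightarrow> bool" and D :: "'a set"
  assumes "simple_graph V E"
    and "P4_free V E"
    and "dominating_set V E D"
    and "card D = domination_number V E"
  shows "int (card V) - int (domination_number V E) \<le> int (degree_sum V E D)
     \<and> int (degree_sum V E D) \<le> 2 * int (card V) - int (domination_number V E)"
proof -
  let ?m = "\<lambda>w. card (D \<inter> closed_neighbourhood V E w)"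
  have count: "degree_sum V E D + card D = (\<Sum>w\<in>V. ?m w)"
    using degree_sum_add_card_eq_sum_card_inter_closed_neighbourhood[OF assms(1)
        dominating_set_subset[OF assms(3)]] .
  have "card V \<le> (\<Sum>w\<in>V. ?m w)"
    using sum_mono[of V "\<lambda>_. 1" ?m] dominating_set_meets_closed_neighbourhood[OF assms(3)]
      dominating_set_finite[OF assms(1,3)]
    by (simp add: Suc_le_eq card_gt_0_iff)
  moreover have "(\<Sum>w\<in>V. ?m w) \<le> 2 * card V"
    using sum_mono[of V ?m "\<lambda>_. 2"] P4_free_min_dominating_set_closed_neighbourhood[OF assms]
    by simp
  ultimately show ?thesis
    using count assms(4) by linarith
qed

end
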